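(* Let $\mathcal M=(M,<,+,0,\ldots)$ be a definably complete locally o-minimal expansion of an ordered abelian group. Let $C\subseteq M^m$ be a definable, closed and bounded set, let $s\in M$ with $s>0$, and let $\{f_t:C\to M\}_{0<t<s}$ be a definable family of functions which is pointwise convergent and is a definable family of equi-continuous functions. Then the family $\{f_t\}_{0<t<s}$ is uniformly convergent.
   Context: "Definable" means definable in $\mathcal M$ with parameters. $\mathcal M$ is definably complete if every definable subset of $M$ has a supremum and an infimum in $M\cup\{\pm\infty\}$; it is locally o-minimal if for every definable $X\subseteq M$ and every $a\in M$ there is an open interval $I\ni a$ such that $X\cap I$ is a finite union of points and open intervals. For $x=(x_1,\dots,x_n)\in M^n$, $|x|:=\max_i |x_i|$; $M^n$ carries the product of the order topology. A definable family of functions $\{f_t:C\to M\}_{0<t<s}$ means there is a definable $F:C\times(0,s)\to M$ with $f_t(x)=F(x,t)$. It is a family of equi-continuous functions if for all $\varepsilon>0$ and all $x\in C$ there is $\delta>0$ such that for all $t\in(0,s)$ and all $x'\in C$ with $|x-x'|<\delta$ we have $|F(x,t)-F(x',t)|<\varepsilon$. It is pointwise convergent if for every $\varepsilon>0$ and $x\in C$ there is $s'>0$ with $|f_t(x)-f_{t'}(x)|<\varepsilon$ for all $t,t'\in(0,s')$. It is uniformly convergent if for every $\varepsilon>0$ there is $s'>0$ with $|f_t(x)-f_{t'}(x)|<\varepsilon$ for all $x\in C$ and all $t,t'\in(0,s')$. *)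

theory Defs
  imports Main
begin

text \<open>The ambient ordered abelian group is a type of class linordered_ab_group_add.
  M^n is represented as the set of lists of length n.\<close>

definition tuples :: "nat \<Rightarrow> 'a list set" where
  "tuples n = {xs. length xs = n}"

definition gabs :: "'a::linordered_ab_group_add \<Rightarrow> 'a" where
  "gabs x = max x (- x)"

text \<open>Open interval with endpoints in M \<union> {-inf, +inf} (None = infinite endpoint).\<close>
definition oint :: "'a::linorder option \<Rightarrow> 'a option \<Rightarrow> 'a set" where
  "oint lo hi = {x. (case lo of None \<Rightarrow> True | Some b \<Rightarrow> b < x) \<and>
                    (case hi of None \<Rightarrow> True | Some c \<Rightarrow> x < c)}"

text \<open>A structure on M (van den Dries, Tame Topology, Ch. 1): S n is the collection of
  definable subsets of M^n.  Being an expansion of (M,<,+,0) with definability with parameters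
  means: all singletons, the graph of < and the graph of + are definable.\<close>
definition expansion_structure :: "(nat \<Rightarrow> ('a::linordered_ab_group_add) list set set) \<Rightarrow> bool" where
  "expansion_structure S \<longleftrightarrow>
     (\<forall>n. S n \<subseteq> Pow (tuples n)) \<and>
     (\<forall>n. {} \<in> S n) \<and>
     (\<forall>n A. A \<in> S n \<longrightarrow> tuples n - A \<in> S n) \<and>
     (\<forall>n A B. A \<in> S n \<longrightarrow> B \<in> S n \<longrightarrow> A \<union> B \<in> S n) \<and>
     (\<forall>n A. A \<in> S n \<longrightarrow> {xs @ [y] | xs y. xs \<in> A} \<in> S (Suc n)) \<and>
     (\<forall>n A. A \<in> S n \<longrightarrow> {y # xs | xs y. xs \<in> A} \<in> S (Suc n)) \<and>
     (\<forall>n i j. i < j \<and> j < n \<longrightarrow> {xs \<in> tuples n. xs ! i = xs ! j} \<in> S n) \<and>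
     (\<forall>n A. A \<in> S (Suc n) \<longrightarrow> butlast ` A \<in> S n) \<and>
     (\<forall>a. {[a]} \<in> S 1) \<and>
     {[x, y] | x y. x < y} \<in> S 2 \<and>
     {[x, y, z] | x y z. z = x + y} \<in> S 3"

definition definable1 :: "(nat \<Rightarrow> 'a list set set) \<Rightarrow> 'a set \<Rightarrow> bool" where
  "definable1 S X \<longleftrightarrow> (\<lambda>x. [x]) ` X \<in> S 1"

definition definably_complete :: "(nat \<Rightarrow> ('a::linordered_ab_group_add) list set set) \<Rightarrow> bool" where
  "definably_complete S \<longleftrightarrow>
     (\<forall>X. definable1 S X \<longrightarrow>
        ((X \<noteq> {} \<and> (\<exists>b. \<forall>x\<in>X. x \<le> b)) \<longrightarrow>
            (\<exists>u. (\<forall>x\<in>X. x \<le> u) \<and> (\<forall>b. (\<forall>x\<in>X. x \<le> b) \<longrightarrow> u \<le> b))) \<and>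
        ((X \<noteq> {} \<and> (\<exists>b. \<forall>x\<in>X. b \<le> x)) \<longrightarrow>
            (\<exists>l. (\<forall>x\<in>X. l \<le> x) \<and> (\<forall>b. (\<forall>x\<in>X. b \<le> x) \<longrightarrow> b \<le> l))))"

definition finite_union_points_intervals :: "'a::linorder set \<Rightarrow> bool" where
  "finite_union_points_intervals Y \<longleftrightarrow>
     (\<exists>P Q. finite P \<and> finite Q \<and> Y = P \<union> (\<Union>(lo, hi)\<in>Q. oint lo hi))"

definition locally_o_minimal :: "(nat \<Rightarrow> ('a::linordered_ab_group_add) list set set) \<Rightarrow> bool" where
  "locally_o_minimal S \<longleftrightarrow>
     (\<forall>X a. definable1 S X \<longrightarrow>
        (\<exists>lo hi. a \<in> oint lo hi \<and> finite_union_points_intervals (X \<inter> oint lo hi)))"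

definition open_in_power :: "nat \<Rightarrow> ('a::linorder) list set \<Rightarrow> bool" where
  "open_in_power m U \<longleftrightarrow> U \<subseteq> tuples m \<and>
     (\<forall>x\<in>U. \<exists>lo hi :: nat \<Rightarrow> 'a option.
        (\<forall>i<m. x ! i \<in> oint (lo i) (hi i)) \<and>
        {y \<in> tuples m. \<forall>i<m. y ! i \<in> oint (lo i) (hi i)} \<subseteq> U)"

definition closed_in_power :: "nat \<Rightarrow> ('a::linorder) list set \<Rightarrow> bool" where
  "closed_in_power m C \<longleftrightarrow> C \<subseteq> tuples m \<and> open_in_power m (tuples m - C)"

definition bounded_in_power :: "nat \<Rightarrow> ('a::linordered_ab_group_add) list set \<Rightarrow> bool" where
  "bounded_in_power m C \<longleftrightarrow> (\<exists>B. \<forall>x\<in>C. \<forall>i<m. gabs (x ! i) \<le> B)"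

definition near :: "nat \<Rightarrow> ('a::linordered_ab_group_add) list \<Rightarrow> 'a list \<Rightarrow> 'a \<Rightarrow> bool" where
  "near m x x' d \<longleftrightarrow> (\<forall>i<m. gabs (x ! i - x' ! i) < d)"

definition definable_family :: "(nat \<Rightarrow> ('a::linordered_ab_group_add) list set set) \<Rightarrow> nat \<Rightarrow> 'a list set \<Rightarrow> 'a \<Rightarrow> ('a list \<Rightarrow> 'a \<Rightarrow> 'a) \<Rightarrow> bool" where
  "definable_family S m C s F \<longleftrightarrow>
     {x @ [t, F x t] | x t. x \<in> C \<and> 0 < t \<and> t < s} \<in> S (m + 2)"

definition equi_continuous_family :: "nat \<Rightarrow> ('a::linordered_ab_group_add) list set \<Rightarrow> 'a \<Rightarrow> ('a list \<Rightarrow> 'a \<Rightarrow> 'a) \<Rightarrow> bool" where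
  "equi_continuous_family m C s F \<longleftrightarrow>
     (\<forall>e>0. \<forall>x\<in>C. \<exists>d>0. \<forall>t. 0 < t \<and> t < s \<longrightarrow>
        (\<forall>x'\<in>C. near m x x' d \<longrightarrow> gabs (F x t - F x' t) < e))"

definition pointwise_convergent_family :: "('a::linordered_ab_group_add) list set \<Rightarrow> 'a \<Rightarrow> ('a list \<Rightarrow> 'a \<Rightarrow> 'a) \<Rightarrow> bool" where
  "pointwise_convergent_family C s F \<longleftrightarrow>
     (\<forall>e>0. \<forall>x\<in>C. \<exists>s'>0. \<forall>t t'. 0 < t \<and> t < s' \<and> t < s \<and> 0 < t' \<and> t' < s' \<and> t' < s \<longrightarrow>
        gabs (F x t - F x t') < e)"

definition uniformly_convergent_family :: "('a::linordered_ab_group_add) list set \<Rightarrow> 'a \<Rightarrow> ('a list \<Rightarrow> 'a \<Rightarrow> 'a) \<Rightarrow> bool" where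
  "uniformly_convergent_family C s F \<longleftrightarrow>
     (\<forall>e>0. \<exists>s'>0. \<forall>x\<in>C. \<forall>t t'. 0 < t \<and> t < s' \<and> t < s \<and> 0 < t' \<and> t' < s' \<and> t' < s \<longrightarrow>
        gabs (F x t - F x t') < e)"

end

theory Submission
  imports Defs
begin

text \<open>Fix \<open>\<epsilon> > 0\<close> and let \<open>Z\<close> be the definable set of pairs \<open>(x, u)\<close> such that \<open>x \<notin> C\<close> or the values
  \<open>F x t\<close>, \<open>0 < t < min u s\<close>, differ pairwise by less than \<open>\<epsilon>\<close>. Uniform convergence asks for a single
  \<open>u > 0\<close> with \<open>(x, u) \<in> Z\<close> for all \<open>x \<in> C\<close>. Such a \<open>u\<close> exists locally around every point of a box
  containing \<open>C\<close>: near a point of \<open>C\<close> by pointwise convergence and equicontinuity (an \<open>\<epsilon>/3\<close> argument),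
  near a point outside \<open>C\<close> because \<open>C\<close> is closed. A definable set of this kind that is downward
  closed in \<open>u\<close> and locally admits a positive \<open>u\<close> on a box admits one uniformly on the box: this
  definable compactness is proved by induction on the dimension, and in dimension one it is the
  classical supremum argument, available for definable sets by definable completeness.\<close>

section \<open>Closure properties of definable sets\<close>

lemma
  assumes "expansion_structure S"
  shows structure_subsets: "\<forall>n. S n \<subseteq> Pow (tuples n)"
    and structure_empty: "\<forall>n. {} \<in> S n"
    and structure_complement: "\<forall>n A. A \<in> S n \<longrightarrow> tuples n - A \<in> S n"
    and structure_Un: "\<forall>n A B. A \<in> S n \<longrightarrow> B \<in> S n \<longrightarrow> A \<union> B \<in> S n"
    and structure_Cons: "\<forall>n A. A \<in> S n \<longrightarrow> {y # xs | xs y. xs \<in> A} \<in> S (Suc n)"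
    and structure_diagonal: "\<forall>n i j. i < j \<and> j < n \<longrightarrow> {xs \<in> tuples n. xs ! i = xs ! j} \<in> S n"
    and structure_butlast: "\<forall>n A. A \<in> S (Suc n) \<longrightarrow> butlast ` A \<in> S n"
    and structure_singleton: "\<forall>a. {[a]} \<in> S 1"
    and structure_less: "{[x, y] | x y. x < y} \<in> S 2"
    and structure_plus: "{[x, y, z] | x y z. z = x + y} \<in> S 3"
  using assms unfolding expansion_structure_def by - (elim conjE, assumption)+

locale expansion =
  fixes S :: "nat \<Rightarrow> ('a::linordered_ab_group_add) list set set"
  assumes ES: "expansion_structure S"
begin

lemma definable_subset: "A \<in> S n \<Longrightarrow> A \<subseteq> tuples n"
  using structure_subsets[OF ES] by blast

lemma definable_complement: "A \<in> S n \<Longrightarrow> tuples n - A \<in> S n"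
  using structure_complement[OF ES] by blast

lemma definable_Un: "A \<in> S n \<Longrightarrow> B \<in> S n \<Longrightarrow> A \<union> B \<in> S n"
  using structure_Un[OF ES] by blast

lemma definable_Cons: "A \<in> S n \<Longrightarrow> {y # xs | xs y. xs \<in> A} \<in> S (Suc n)"
  using structure_Cons[OF ES] by blast

lemma definable_butlast: "A \<in> S (Suc n) \<Longrightarrow> butlast ` A \<in> S n"
  using structure_butlast[OF ES] by blast

lemma definable_diagonal_less: "i < j \<Longrightarrow> j < n \<Longrightarrow> {xs \<in> tuples n. xs ! i = xs ! j} \<in> S n"
  using structure_diagonal[OF ES] by blast

lemma definable_singleton: "{[a]} \<in> S 1"
  using structure_singleton[OF ES] by blast

lemma definable_tuples: "tuples n \<in> S n"
  using definable_complement[of "{}" n] structure_empty[OF ES] by simp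

lemma definable_Int:
  assumes "A \<in> S n" "B \<in> S n"
  shows "A \<inter> B \<in> S n"
proof -
  have "A \<inter> B = tuples n - ((tuples n - A) \<union> (tuples n - B))"
    using definable_subset assms by blast
  thus ?thesis using assms by (simp add: definable_complement definable_Un)
qed

lemma definable_diagonal: assumes "i < n" "j < n"
  shows "{xs \<in> tuples n. xs ! i = xs ! j} \<in> S n"
proof -
  consider "i < j" | "i = j" | "j < i" by arith
  thus ?thesis
  proof cases
    case 1 thus ?thesis using definable_diagonal_less assms by blast
  next
    case 2 thus ?thesis using definable_tuples by simp
  next
    case 3
    have eq: "{xs \<in> tuples n. xs ! i = xs ! j} = {xs \<in> tuples n. xs ! j = xs ! i}" by auto
    show ?thesis unfolding eq by (rule definable_diagonal_less[OF 3 assms(1)])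
  qed
qed

lemma definable_prefix_cylinder: assumes "A \<in> S k"
  shows "{ys @ zs | ys zs. length ys = n \<and> zs \<in> A} \<in> S (n + k)"
proof (induction n)
  case 0
  have "{ys @ zs | ys zs. length ys = 0 \<and> zs \<in> A} = A" by auto
  thus ?case using assms by simp
next
  case (Suc n)
  have "{ys @ zs | ys zs. length ys = Suc n \<and> zs \<in> A} =
        {y # xs | xs y. xs \<in> {ys @ zs | ys zs. length ys = n \<and> zs \<in> A}}"
  proof (intro set_eqI iffI)
    fix w assume "w \<in> {ys @ zs | ys zs. length ys = Suc n \<and> zs \<in> A}"
    then obtain ys zs where "w = ys @ zs" "length ys = Suc n" "zs \<in> A" by blast
    then obtain y ys' where "ys = y # ys'" "length ys' = n" by (auto simp: length_Suc_conv)
    thus "w \<in> {y # xs | xs y. xs \<in> {ys @ zs | ys zs. length ys = n \<and> zs \<in> A}}"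
      using \<open>w = ys @ zs\<close> \<open>zs \<in> A\<close> by auto
  next
    fix w assume "w \<in> {y # xs | xs y. xs \<in> {ys @ zs | ys zs. length ys = n \<and> zs \<in> A}}"
    then obtain y ys zs where "w = y # (ys @ zs)" "length ys = n" "zs \<in> A" by blast
    thus "w \<in> {ys @ zs | ys zs. length ys = Suc n \<and> zs \<in> A}"
      by (intro CollectI exI[of _ "y # ys"] exI[of _ zs]) auto
  qed
  thus ?case using definable_Cons[OF Suc.IH] by simp
qed

lemma definable_projection:
  "A \<in> S (n + k) \<Longrightarrow> {xs. \<exists>zs. length zs = k \<and> xs @ zs \<in> A} \<in> S n"
proof (induction k arbitrary: A)
  case 0
  thus ?case by simp
next
  case (Suc k)
  have sub: "A \<subseteq> tuples (Suc (n + k))" using definable_subset Suc.prems by simp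
  have bA: "butlast ` A \<in> S (n + k)" using definable_butlast Suc.prems by simp
  have "{xs. \<exists>zs. length zs = k \<and> xs @ zs \<in> butlast ` A} = {xs. \<exists>zs. length zs = Suc k \<and> xs @ zs \<in> A}"
  proof (intro set_eqI iffI)
    fix xs assume "xs \<in> {xs. \<exists>zs. length zs = k \<and> xs @ zs \<in> butlast ` A}"
    then obtain zs w where zs: "length zs = k" "xs @ zs = butlast w" "w \<in> A" by blast
    have "w \<noteq> []" using sub zs(3) by (auto simp: tuples_def)
    hence "w = butlast w @ [last w]" by simp
    hence "xs @ (zs @ [last w]) \<in> A" using zs by (metis append_assoc)
    thus "xs \<in> {xs. \<exists>zs. length zs = Suc k \<and> xs @ zs \<in> A}" using zs(1)
      by (intro CollectI exI[of _ "zs @ [last w]"]) simp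
  next
    fix xs assume "xs \<in> {xs. \<exists>zs. length zs = Suc k \<and> xs @ zs \<in> A}"
    then obtain zs where zs: "length zs = Suc k" "xs @ zs \<in> A" by blast
    hence "zs \<noteq> []" by auto
    hence "butlast (xs @ zs) = xs @ butlast zs" by (simp add: butlast_append)
    thus "xs \<in> {xs. \<exists>zs. length zs = k \<and> xs @ zs \<in> butlast ` A}" using zs
      by (intro CollectI exI[of _ "butlast zs"]) (auto intro: image_eqI[of _ _ "xs @ zs"])
  qed
  thus ?case using Suc.IH[OF bA] by simp
qed

lemma definable_diagonals: assumes "\<forall>i<k. f i < n" "j \<le> k"
  shows "{xs \<in> tuples (n + k). \<forall>i<j. xs ! (f i) = xs ! (n + i)} \<in> S (n + k)"
  using assms(2)
proof (induction j)
  case 0 thus ?case using definable_tuples by simp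
next
  case (Suc j)
  have eq: "{xs \<in> tuples (n + k). \<forall>i<Suc j. xs ! (f i) = xs ! (n + i)} =
    {xs \<in> tuples (n + k). \<forall>i<j. xs ! (f i) = xs ! (n + i)} \<inter> {xs \<in> tuples (n + k). xs ! (f j) = xs ! (n + j)}"
    by (auto simp: less_Suc_eq)
  have "f j < n" using Suc.prems assms(1) by simp
  hence d1: "{xs \<in> tuples (n + k). xs ! (f j) = xs ! (n + j)} \<in> S (n + k)"
    using Suc.prems by (intro definable_diagonal) auto
  have d0: "{xs \<in> tuples (n + k). \<forall>i<j. xs ! (f i) = xs ! (n + i)} \<in> S (n + k)"
    using Suc by simp
  show ?case unfolding eq by (rule definable_Int[OF d0 d1])
qed

text \<open>The selected coordinates are appended as new variables, tied to the old ones by diagonals,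
  and then projected away again.\<close>

lemma definable_reindex: assumes A: "A \<in> S k" and f: "\<forall>i<k. f i < n"
  shows "{xs \<in> tuples n. map (\<lambda>i. xs ! (f i)) [0..<k] \<in> A} \<in> S n"
proof -
  define P where "P = {ys @ zs | ys zs. length ys = n \<and> zs \<in> A} \<inter>
     {xs \<in> tuples (n + k). \<forall>i<k. xs ! (f i) = xs ! (n + i)}"
  have "P \<in> S (n + k)" unfolding P_def
    using definable_Int[OF definable_prefix_cylinder[OF A] definable_diagonals[OF f order_refl]] .
  note pr = definable_projection[OF this]
  have "{xs. \<exists>zs. length zs = k \<and> xs @ zs \<in> P} = {xs \<in> tuples n. map (\<lambda>i. xs ! (f i)) [0..<k] \<in> A}"
  proof (intro set_eqI iffI)
    fix xs assume "xs \<in> {xs. \<exists>zs. length zs = k \<and> xs @ zs \<in> P}"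
    then obtain zs ys zs' where h: "length zs = k" "xs @ zs = ys @ zs'" "length ys = n" "zs' \<in> A"
      "length (xs @ zs) = n + k" "\<forall>i<k. (xs @ zs) ! (f i) = (xs @ zs) ! (n + i)"
      unfolding P_def tuples_def by blast
    have lx: "length xs = n" using h by simp
    hence "xs = ys \<and> zs = zs'" using h(2,3) by (simp add: append_eq_append_conv)
    moreover have "map (\<lambda>i. xs ! (f i)) [0..<k] = zs"
    proof (rule nth_equalityI)
      show "length (map (\<lambda>i. xs ! f i) [0..<k]) = length zs" using h by simp
      fix i assume "i < length (map (\<lambda>i. xs ! f i) [0..<k])"
      hence i: "i < k" by simp
      have "(xs @ zs) ! (f i) = xs ! f i" using f i lx by (simp add: nth_append)
      moreover have "(xs @ zs) ! (n + i) = zs ! i" using lx by (simp add: nth_append)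
      ultimately show "map (\<lambda>i. xs ! f i) [0..<k] ! i = zs ! i" using h(6) i by simp
    qed
    ultimately show "xs \<in> {xs \<in> tuples n. map (\<lambda>i. xs ! (f i)) [0..<k] \<in> A}"
      using lx h(4) by (simp add: tuples_def)
  next
    fix xs assume "xs \<in> {xs \<in> tuples n. map (\<lambda>i. xs ! (f i)) [0..<k] \<in> A}"
    hence lx: "length xs = n" and m: "map (\<lambda>i. xs ! (f i)) [0..<k] \<in> A" by (auto simp: tuples_def)
    let ?zs = "map (\<lambda>i. xs ! (f i)) [0..<k]"
    have "xs @ ?zs \<in> P" unfolding P_def tuples_def
      using lx m f by (auto simp: nth_append)
    thus "xs \<in> {xs. \<exists>zs. length zs = k \<and> xs @ zs \<in> P}" by (intro CollectI exI[of _ ?zs]) simp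
  qed
  thus ?thesis using pr by simp
qed

end

section \<open>Sets defined by formulas\<close>

text \<open>Variables are positions in a tuple: \<open>Atom A is\<close> holds at \<open>xs\<close> when the entries of \<open>xs\<close> at the
  positions \<open>is\<close> form a tuple in \<open>A\<close>, and \<open>Exists\<close> binds the position \<open>length xs\<close>. Atoms range over
  sets already in the structure, so every formula defines a set of the structure.\<close>

datatype 'b fm = Atom "'b list set" "nat list" | Neg "'b fm" | Disj "'b fm" "'b fm" | Exists "'b fm"

fun holds :: "'b fm \<Rightarrow> 'b list \<Rightarrow> bool" where
  "holds (Atom A is) xs \<longleftrightarrow> map (nth xs) is \<in> A"
| "holds (Neg \<phi>) xs \<longleftrightarrow> \<not> holds \<phi> xs"
| "holds (Disj \<phi> \<psi>) xs \<longleftrightarrow> holds \<phi> xs \<or> holds \<psi> xs"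
| "holds (Exists \<phi>) xs \<longleftrightarrow> (\<exists>y. holds \<phi> (xs @ [y]))"

fun wf_fm :: "(nat \<Rightarrow> 'b list set set) \<Rightarrow> nat \<Rightarrow> 'b fm \<Rightarrow> bool" where
  "wf_fm S n (Atom A is) \<longleftrightarrow> A \<in> S (length is) \<and> (\<forall>i\<in>set is. i < n)"
| "wf_fm S n (Neg \<phi>) \<longleftrightarrow> wf_fm S n \<phi>"
| "wf_fm S n (Disj \<phi> \<psi>) \<longleftrightarrow> wf_fm S n \<phi> \<and> wf_fm S n \<psi>"
| "wf_fm S n (Exists \<phi>) \<longleftrightarrow> wf_fm S (Suc n) \<phi>"

definition solutions :: "nat \<Rightarrow> 'b fm \<Rightarrow> 'b list set" where
  "solutions n \<phi> = {xs \<in> tuples n. holds \<phi> xs}"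

lemma mem_solutions [simp]: "xs \<in> solutions n \<phi> \<longleftrightarrow> length xs = n \<and> holds \<phi> xs"
  by (simp add: solutions_def tuples_def)

definition Conj :: "'b fm \<Rightarrow> 'b fm \<Rightarrow> 'b fm" where
  "Conj \<phi> \<psi> = Neg (Disj (Neg \<phi>) (Neg \<psi>))"

definition Imp :: "'b fm \<Rightarrow> 'b fm \<Rightarrow> 'b fm" where
  "Imp \<phi> \<psi> = Disj (Neg \<phi>) \<psi>"

definition Forall :: "'b fm \<Rightarrow> 'b fm" where
  "Forall \<phi> = Neg (Exists (Neg \<phi>))"

lemma holds_derived [simp]:
  "holds (Conj \<phi> \<psi>) xs \<longleftrightarrow> holds \<phi> xs \<and> holds \<psi> xs"
  "holds (Imp \<phi> \<psi>) xs \<longleftrightarrow> (holds \<phi> xs \<longrightarrow> holds \<psi> xs)"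
  "holds (Forall \<phi>) xs \<longleftrightarrow> (\<forall>y. holds \<phi> (xs @ [y]))"
  by (auto simp: Conj_def Imp_def Forall_def)

lemma wf_fm_derived [simp]:
  "wf_fm S n (Conj \<phi> \<psi>) \<longleftrightarrow> wf_fm S n \<phi> \<and> wf_fm S n \<psi>"
  "wf_fm S n (Imp \<phi> \<psi>) \<longleftrightarrow> wf_fm S n \<phi> \<and> wf_fm S n \<psi>"
  "wf_fm S n (Forall \<phi>) \<longleftrightarrow> wf_fm S (Suc n) \<phi>"
  by (auto simp: Conj_def Imp_def Forall_def)

fun Conjs :: "'b fm list \<Rightarrow> 'b fm" where
  "Conjs [] = Neg (Atom {} [])"
| "Conjs (\<phi> # \<phi>s) = Conj \<phi> (Conjs \<phi>s)"

lemma holds_Conjs [simp]: "holds (Conjs \<phi>s) xs \<longleftrightarrow> (\<forall>\<phi>\<in>set \<phi>s. holds \<phi> xs)"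
  by (induction \<phi>s) auto

fun Foralls :: "nat \<Rightarrow> 'b fm \<Rightarrow> 'b fm" where
  "Foralls 0 \<phi> = \<phi>"
| "Foralls (Suc k) \<phi> = Forall (Foralls k \<phi>)"

lemma holds_Foralls [simp]: "holds (Foralls k \<phi>) xs \<longleftrightarrow> (\<forall>zs. length zs = k \<longrightarrow> holds \<phi> (xs @ zs))"
proof (induction k arbitrary: xs)
  case (Suc k)
  show ?case
    by (auto simp: Suc length_Suc_conv)
qed simp

lemma wf_fm_Foralls [simp]: "wf_fm S n (Foralls k \<phi>) \<longleftrightarrow> wf_fm S (n + k) \<phi>"
  by (induction k arbitrary: n) auto

context expansion
begin

lemma wf_fm_Conjs: "\<forall>\<phi>\<in>set \<phi>s. wf_fm S n \<phi> \<Longrightarrow> wf_fm S n (Conjs \<phi>s)"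
  by (induction \<phi>s) (auto simp: structure_empty[OF ES])

lemma definable_solutions: "wf_fm S n \<phi> \<Longrightarrow> solutions n \<phi> \<in> S n"
proof (induction \<phi> arbitrary: n)
  case (Atom A "is")
  have "map (\<lambda>i. xs ! (is ! i)) [0..<length is] = map (nth xs) is" for xs :: "'a list"
    by (rule nth_equalityI) auto
  moreover have "{xs \<in> tuples n. map (\<lambda>i. xs ! (is ! i)) [0..<length is] \<in> A} \<in> S n"
    using Atom by (intro definable_reindex) auto
  ultimately show ?case by (simp add: solutions_def)
next
  case (Neg \<phi>)
  have "solutions n (Neg \<phi>) = tuples n - solutions n \<phi>" by (auto simp: solutions_def)
  thus ?case using Neg definable_complement by simp
next
  case (Disj \<phi> \<psi>)
  have "solutions n (Disj \<phi> \<psi>) = solutions n \<phi> \<union> solutions n \<psi>" by (auto simp: solutions_def)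
  thus ?case using Disj definable_Un by simp
next
  case (Exists \<phi>)
  have "solutions n (Exists \<phi>) = butlast ` solutions (Suc n) \<phi>"
  proof (intro set_eqI iffI)
    fix xs assume "xs \<in> solutions n (Exists \<phi>)"
    then obtain y where "length xs = n" "holds \<phi> (xs @ [y])" by auto
    thus "xs \<in> butlast ` solutions (Suc n) \<phi>" by (intro image_eqI[of _ _ "xs @ [y]"]) auto
  next
    fix xs assume "xs \<in> butlast ` solutions (Suc n) \<phi>"
    then obtain w where w: "xs = butlast w" "length w = Suc n" "holds \<phi> w" by auto
    hence "w = xs @ [last w]" by (metis append_butlast_last_id list.size(3) nat.distinct(1))
    thus "xs \<in> solutions n (Exists \<phi>)" using w by (auto intro!: exI[of _ "last w"])
  qed
  thus ?case using Exists definable_butlast by simp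
qed

end


lemma gabs_less_iff: "gabs x < d \<longleftrightarrow> x < d \<and> - x < d"
  by (simp add: gabs_def)

lemma gabs_le_iff: "gabs x \<le> d \<longleftrightarrow> x \<le> d \<and> - x \<le> d"
  by (simp add: gabs_def)

lemma gabs_diff_commute: "gabs (a - b) = gabs (b - a)"
  unfolding gabs_def by (metis minus_diff_eq max.commute)

lemma gabs_diff_less_iff: "gabs (x - y) < d \<longleftrightarrow> x < y + d \<and> y < x + d"
  by (simp add: gabs_less_iff diff_less_eq add.commute)

lemma gabs_triangle: "gabs (x + y) \<le> gabs x + gabs y"
proof -
  have "x + y \<le> max x (- x) + max y (- y)" "- x + - y \<le> max x (- x) + max y (- y)"
    by (intro add_mono; simp)+
  thus ?thesis unfolding gabs_def by simp
qed

text \<open>The group may be discrete, so there is no \<open>e / 2\<close>; if nothing lies strictly between \<open>0\<close>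
  and \<open>e\<close>, then \<open>gabs x < e\<close> already forces \<open>x = 0\<close>.\<close>

lemma gabs_add_small:
  assumes "0 < e"
  obtains d where "0 < d" "\<And>x y. gabs x < d \<Longrightarrow> gabs y < d \<Longrightarrow> gabs (x + y) < e"
proof (cases "\<exists>c. 0 < c \<and> c < e")
  case True
  then obtain c where c: "0 < c" "c < e" by blast
  show ?thesis
  proof
    show "0 < min c (e - c)" using c by simp
    fix x y assume "gabs x < min c (e - c)" "gabs y < min c (e - c)"
    hence "gabs x + gabs y < c + (e - c)" by (intro add_strict_mono) simp_all
    thus "gabs (x + y) < e" using gabs_triangle[of x y] by simp
  qed
next
  case False
  have zero: "x = 0" if "gabs x < e" for x
    using False that gabs_le_iff[of x 0] by (metis order.antisym neg_le_0_iff_le not_le)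
  show ?thesis
  proof (rule that[OF assms])
    fix x y assume "gabs x < e" "gabs y < e"
    thus "gabs (x + y) < e" using zero[of x] zero[of y] assms by (simp add: gabs_def)
  qed
qed

lemma gabs_add3_small:
  assumes "0 < e"
  obtains d where "0 < d" "\<And>x y z. gabs x < d \<Longrightarrow> gabs y < d \<Longrightarrow> gabs z < d \<Longrightarrow> gabs (x + y + z) < e"
proof -
  obtain d1 where d1: "0 < d1" "\<And>x y. gabs x < d1 \<Longrightarrow> gabs y < d1 \<Longrightarrow> gabs (x + y) < e"
    using gabs_add_small[OF assms] by blast
  obtain d2 where d2: "0 < d2" "\<And>x y. gabs x < d2 \<Longrightarrow> gabs y < d2 \<Longrightarrow> gabs (x + y) < d1"
    using gabs_add_small[OF d1(1)] by blast
  show ?thesis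
    by (rule that[of "min d1 d2"]) (use d1 d2 in auto)
qed

definition lt_rel :: "'a::linordered_ab_group_add list set" where
  "lt_rel = {[x, y] | x y. x < y}"

definition le_rel :: "'a::linordered_ab_group_add list set" where
  "le_rel = {[x, y] | x y. x \<le> y}"

definition sum_rel :: "'a::linordered_ab_group_add list set" where
  "sum_rel = {[x, y, z] | x y z. z = x + y}"

definition ge_const :: "'a::linordered_ab_group_add \<Rightarrow> 'a list set" where
  "ge_const a = {[x] | x. a \<le> x}"

definition le_const :: "'a::linordered_ab_group_add \<Rightarrow> 'a list set" where
  "le_const a = {[x] | x. x \<le> a}"

definition gt_const :: "'a::linordered_ab_group_add \<Rightarrow> 'a list set" where
  "gt_const a = {[x] | x. a < x}"

definition lt_const :: "'a::linordered_ab_group_add \<Rightarrow> 'a list set" where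
  "lt_const a = {[x] | x. x < a}"

definition dist_less_rel :: "'a::linordered_ab_group_add list set" where
  "dist_less_rel = {[x, y, d] | x y d. gabs (x - y) < d}"

definition dist_less :: "'a::linordered_ab_group_add \<Rightarrow> 'a list set" where
  "dist_less e = {[x, y] | x y. gabs (x - y) < e}"

definition ball_rel :: "'a::linordered_ab_group_add \<Rightarrow> 'a list set" where
  "ball_rel c = {[x, r] | x r. gabs (c - x) < r}"

lemma mem_rels [simp]:
  "[x, y] \<in> lt_rel \<longleftrightarrow> x < y"
  "[x, y] \<in> le_rel \<longleftrightarrow> x \<le> y"
  "[x, y, z] \<in> sum_rel \<longleftrightarrow> z = x + y"
  "[x] \<in> ge_const a \<longleftrightarrow> a \<le> x"
  "[x] \<in> le_const a \<longleftrightarrow> x \<le> a"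
  "[x] \<in> gt_const a \<longleftrightarrow> a < x"
  "[x] \<in> lt_const a \<longleftrightarrow> x < a"
  "[x, y, d] \<in> dist_less_rel \<longleftrightarrow> gabs (x - y) < d"
  "[x, y] \<in> dist_less e \<longleftrightarrow> gabs (x - y) < e"
  "[x, r] \<in> ball_rel c \<longleftrightarrow> gabs (c - x) < r"
  by (simp_all add: lt_rel_def le_rel_def sum_rel_def ge_const_def le_const_def gt_const_def
      lt_const_def dist_less_rel_def dist_less_def ball_rel_def)

context expansion
begin

lemma definable_lt_rel: "lt_rel \<in> S 2"
  using structure_less[OF ES] by (simp add: lt_rel_def)

lemma definable_sum_rel: "sum_rel \<in> S 3"
  using structure_plus[OF ES] by (simp add: sum_rel_def)

lemma definable_le_rel: "le_rel \<in> S 2"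
proof -
  have "(le_rel :: 'a list set) = lt_rel \<union> {xs \<in> tuples 2. xs ! 0 = xs ! 1}"
    by (auto simp: le_rel_def lt_rel_def tuples_def numeral_2_eq_2 length_Suc_conv)
  thus ?thesis using definable_Un[OF definable_lt_rel definable_diagonal[of 0 2 1]] by simp
qed

lemma definable_by_formula: "A = solutions n \<phi> \<Longrightarrow> wf_fm S n \<phi> \<Longrightarrow> A \<in> S n"
  using definable_solutions by simp

lemma definable_const_rels:
  "ge_const a \<in> S 1" "le_const a \<in> S 1" "gt_const a \<in> S 1" "lt_const a \<in> S 1"
proof -
  note rels = definable_le_rel definable_lt_rel definable_singleton
  note rels = rels[unfolded numeral_2_eq_2 One_nat_def]
  show "ge_const a \<in> S 1"
    by (rule definable_by_formula[where \<phi> = "Exists (Conj (Atom {[a]} [1]) (Atom le_rel [1, 0]))"])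
      (auto simp: ge_const_def length_Suc_conv rels numeral_2_eq_2)
  show "le_const a \<in> S 1"
    by (rule definable_by_formula[where \<phi> = "Exists (Conj (Atom {[a]} [1]) (Atom le_rel [0, 1]))"])
      (auto simp: le_const_def length_Suc_conv rels numeral_2_eq_2)
  show "gt_const a \<in> S 1"
    by (rule definable_by_formula[where \<phi> = "Exists (Conj (Atom {[a]} [1]) (Atom lt_rel [1, 0]))"])
      (auto simp: gt_const_def length_Suc_conv rels numeral_2_eq_2)
  show "lt_const a \<in> S 1"
    by (rule definable_by_formula[where \<phi> = "Exists (Conj (Atom {[a]} [1]) (Atom lt_rel [0, 1]))"])
      (auto simp: lt_const_def length_Suc_conv rels numeral_2_eq_2)
qed

lemma definable_dist_rels:
  "dist_less_rel \<in> S 3" "dist_less e \<in> S 2" "ball_rel c \<in> S 2"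
proof -
  note rels = definable_lt_rel definable_sum_rel definable_singleton
  note rels = rels[unfolded numeral_2_eq_2 numeral_3_eq_3 One_nat_def]
  show dist: "dist_less_rel \<in> S 3"
    by (rule definable_by_formula[where \<phi> = "Conj (Exists (Conj (Atom sum_rel [1, 2, 3]) (Atom lt_rel [0, 3])))
      (Exists (Conj (Atom sum_rel [0, 2, 3]) (Atom lt_rel [1, 3])))"])
      (auto simp: dist_less_rel_def length_Suc_conv rels numeral_2_eq_2 numeral_3_eq_3 gabs_diff_less_iff)
  show "dist_less e \<in> S 2"
    by (rule definable_by_formula[where \<phi> = "Exists (Conj (Atom {[e]} [2]) (Atom dist_less_rel [0, 1, 2]))"])
      (auto simp: dist_less_def length_Suc_conv rels dist[unfolded numeral_3_eq_3] numeral_2_eq_2)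
  show "ball_rel c \<in> S 2"
    by (rule definable_by_formula[where \<phi> = "Exists (Conj (Atom {[c]} [2]) (Atom dist_less_rel [2, 0, 1]))"])
      (auto simp: ball_rel_def length_Suc_conv rels dist[unfolded numeral_3_eq_3] numeral_2_eq_2)
qed

text \<open>In the \<open>Suc\<close> form that the simplifier produces for lengths of explicit lists.\<close>

lemmas definable_rels [unfolded numeral_2_eq_2 numeral_3_eq_3 One_nat_def] =
  definable_lt_rel definable_le_rel definable_sum_rel definable_singleton
  definable_const_rels definable_dist_rels

lemma definable1_formula: "wf_fm S 1 \<phi> \<Longrightarrow> definable1 S {c. holds \<phi> [c]}"
proof -
  assume "wf_fm S 1 \<phi>"
  moreover have "(\<lambda>x. [x]) ` {c. holds \<phi> [c]} = solutions 1 \<phi>"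
    by (auto simp: length_Suc_conv)
  ultimately show ?thesis using definable_solutions by (simp add: definable1_def)
qed

end

section \<open>Definable compactness of boxes\<close>

definition down_closed :: "'a::linordered_ab_group_add list set \<Rightarrow> bool" where
  "down_closed Z \<longleftrightarrow> (\<forall>zs u u'. zs @ [u] \<in> Z \<longrightarrow> 0 < u' \<longrightarrow> u' \<le> u \<longrightarrow> zs @ [u'] \<in> Z)"

lemma down_closedD: "down_closed Z \<Longrightarrow> zs @ [u] \<in> Z \<Longrightarrow> 0 < u' \<Longrightarrow> u' \<le> u \<Longrightarrow> zs @ [u'] \<in> Z"
  unfolding down_closed_def by blast

lemma down_closed_pairs:
  "down_closed P \<Longrightarrow> \<forall>y w w'. [y, w] \<in> P \<longrightarrow> 0 < w' \<longrightarrow> w' \<le> w \<longrightarrow> [y, w'] \<in> P"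
  using down_closedD[of P "[_]"] by simp

definition radius_ends :: "'a::linordered_ab_group_add list set \<Rightarrow> 'a \<Rightarrow> 'a \<Rightarrow> 'a set" where
  "radius_ends P a b = {c. a \<le> c \<and> c \<le> b \<and> (\<exists>w>0. \<forall>y. a \<le> y \<and> y \<le> c \<longrightarrow> [y, w] \<in> P)}"

lemma glue_uniform_radius:
  fixes R :: "'a::linordered_ab_group_add \<Rightarrow> 'a \<Rightarrow> bool"
  assumes shrink: "\<forall>y w w'. R y w \<longrightarrow> 0 < w' \<longrightarrow> w' \<le> w \<longrightarrow> R y w'"
    and left: "0 < w1" "\<And>y. a \<le> y \<Longrightarrow> y \<le> c \<Longrightarrow> R y w1"
    and right: "0 < w0" "\<And>y. a \<le> y \<Longrightarrow> y \<le> b \<Longrightarrow> gabs (y - p) < d \<Longrightarrow> R y w0"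
    and between: "\<And>y. c < y \<Longrightarrow> y \<le> y1 \<Longrightarrow> gabs (y - p) < d" and "y1 \<le> b"
    and "a \<le> y" "y \<le> y1"
  shows "R y (min w0 w1)"
proof (cases "y \<le> c")
  case True
  have "R y w1" using left(2) \<open>a \<le> y\<close> True .
  thus ?thesis using shrink left(1) right(1) by simp
next
  case False
  have "R y w0"
    using right(2) \<open>a \<le> y\<close> order_trans[OF \<open>y \<le> y1\<close> \<open>y1 \<le> b\<close>] between \<open>y \<le> y1\<close> False
    by simp
  thus ?thesis using shrink left(1) right(1) by simp
qed

locale dc_expansion = expansion +
  assumes DC: "definably_complete S"
begin

lemma definable_Sup:
  assumes "definable1 S X" "x \<in> X" "\<And>x. x \<in> X \<Longrightarrow> x \<le> b"
  obtains u where "\<And>x. x \<in> X \<Longrightarrow> x \<le> u" "\<And>b. (\<And>x. x \<in> X \<Longrightarrow> x \<le> b) \<Longrightarrow> u \<le> b"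
proof -
  have "X \<noteq> {} \<and> (\<exists>b. \<forall>x\<in>X. x \<le> b)" using assms(2,3) by blast
  then obtain u where "\<forall>x\<in>X. x \<le> u" "\<forall>b. (\<forall>x\<in>X. x \<le> b) \<longrightarrow> u \<le> b"
    using conjunct1[OF DC[unfolded definably_complete_def, rule_format, OF assms(1)]] by blast
  thus ?thesis using that by blast
qed

lemma definable_Inf:
  assumes "definable1 S X" "x \<in> X" "\<And>x. x \<in> X \<Longrightarrow> b \<le> x"
  obtains l where "\<And>x. x \<in> X \<Longrightarrow> l \<le> x" "\<And>b. (\<And>x. x \<in> X \<Longrightarrow> b \<le> x) \<Longrightarrow> b \<le> l"
proof -
  have "X \<noteq> {} \<and> (\<exists>b. \<forall>x\<in>X. b \<le> x)" using assms(2,3) by blast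
  then obtain l where "\<forall>x\<in>X. l \<le> x" "\<forall>b. (\<forall>x\<in>X. b \<le> x) \<longrightarrow> b \<le> l"
    using conjunct2[OF DC[unfolded definably_complete_def, rule_format, OF assms(1)]] by blast
  thus ?thesis using that by blast
qed

lemma definable_radius_ends: "P \<in> S 2 \<Longrightarrow> definable1 S (radius_ends P a b)"
proof -
  assume P: "P \<in> S 2"
  have "radius_ends P a b = {c. holds (Conj (Atom (ge_const a) [0]) (Conj (Atom (le_const b) [0])
      (Exists (Conj (Atom (gt_const 0) [1])
        (Forall (Imp (Conj (Atom (ge_const a) [2]) (Atom le_rel [2, 0])) (Atom P [2, 1]))))))) [c]}"
    by (simp add: radius_ends_def)
  also have "definable1 S \<dots>"
    by (rule definable1_formula) (use P in \<open>simp add: definable_rels numeral_2_eq_2\<close>)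
  finally show ?thesis .
qed

lemma Sup_mem_radius_ends:
  assumes "down_closed P"
    and local: "\<And>y. a \<le> y \<Longrightarrow> y \<le> b \<Longrightarrow>
       \<exists>w>0. \<exists>d>0. \<forall>y'. a \<le> y' \<longrightarrow> y' \<le> b \<longrightarrow> gabs (y' - y) < d \<longrightarrow> [y', w] \<in> P"
    and "a \<in> radius_ends P a b"
    and ub: "\<And>x. x \<in> radius_ends P a b \<Longrightarrow> x \<le> cs"
    and least: "\<And>u. (\<And>x. x \<in> radius_ends P a b \<Longrightarrow> x \<le> u) \<Longrightarrow> cs \<le> u"
  shows "cs \<in> radius_ends P a b"
proof -
  have "a \<le> cs" "cs \<le> b" using ub[OF assms(3)] least[of b] by (auto simp: radius_ends_def)
  obtain w0 d0 where w0: "0 < w0" "0 < d0"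
    "\<And>y. a \<le> y \<Longrightarrow> y \<le> b \<Longrightarrow> gabs (y - cs) < d0 \<Longrightarrow> [y, w0] \<in> P"
    using local[OF \<open>a \<le> cs\<close> \<open>cs \<le> b\<close>] by blast
  have "\<exists>c\<in>radius_ends P a b. cs - d0 < c"
  proof (rule ccontr)
    assume "\<not> (\<exists>c\<in>radius_ends P a b. cs - d0 < c)"
    hence "cs \<le> cs - d0" by (intro least) (auto simp: not_less)
    with w0(2) show False by simp
  qed
  then obtain c w1 where c: "cs - d0 < c" and w1: "0 < w1" "\<And>y. a \<le> y \<Longrightarrow> y \<le> c \<Longrightarrow> [y, w1] \<in> P"
    by (auto simp: radius_ends_def)
  have "gabs (y - cs) < d0" if "c < y" "y \<le> cs" for y
  proof -
    have "cs < c + d0" using c by (simp add: diff_less_eq)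
    also have "\<dots> < y + d0" using \<open>c < y\<close> by simp
    finally have "cs < y + d0" .
    moreover have "y < cs + d0" using \<open>y \<le> cs\<close> w0(2) by (metis add.commute add_strict_increasing)
    ultimately show ?thesis by (simp add: gabs_diff_less_iff)
  qed
  hence "[y, min w0 w1] \<in> P" if "a \<le> y" "y \<le> cs" for y
    using glue_uniform_radius[OF down_closed_pairs[OF assms(1)] w1 w0(1) w0(3)] \<open>cs \<le> b\<close> that by blast
  thus ?thesis using \<open>a \<le> cs\<close> \<open>cs \<le> b\<close> w0(1) w1(1) by (auto simp: radius_ends_def intro!: exI[of _ "min w0 w1"])
qed

text \<open>The group may be discrete, so a point slightly to the right of \<open>cs\<close> is found as the
  infimum of \<open>(cs, b]\<close> rather than as \<open>cs + d/2\<close>.\<close>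

lemma radius_ends_extend:
  assumes "P \<in> S 2" "down_closed P"
    and local: "\<And>y. a \<le> y \<Longrightarrow> y \<le> b \<Longrightarrow>
       \<exists>w>0. \<exists>d>0. \<forall>y'. a \<le> y' \<longrightarrow> y' \<le> b \<longrightarrow> gabs (y' - y) < d \<longrightarrow> [y', w] \<in> P"
    and cs: "cs \<in> radius_ends P a b" "cs < b"
  shows "\<exists>y1\<in>radius_ends P a b. cs < y1"
proof -
  define Y where "Y = {y. cs < y \<and> y \<le> b}"
  have "Y = {y. holds (Conj (Atom (gt_const cs) [0]) (Atom (le_const b) [0])) [y]}"
    by (simp add: Y_def)
  also have "definable1 S \<dots>" by (rule definable1_formula) (simp add: definable_rels)
  finally have "definable1 S Y" .
  moreover have bY: "b \<in> Y" and Ycs: "\<And>y. y \<in> Y \<Longrightarrow> cs \<le> y" using cs(2) by (auto simp: Y_def)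
  ultimately obtain dd where lb: "\<And>y. y \<in> Y \<Longrightarrow> dd \<le> y"
    and great: "\<And>l. (\<And>y. y \<in> Y \<Longrightarrow> l \<le> y) \<Longrightarrow> l \<le> dd"
    using definable_Inf by blast
  have "cs \<le> dd" using great[of cs] Ycs by blast
  moreover have "a \<le> cs" using cs(1) by (simp add: radius_ends_def)
  ultimately obtain w2 d2 where w2: "0 < w2" "0 < d2"
    "\<And>y. a \<le> y \<Longrightarrow> y \<le> b \<Longrightarrow> gabs (y - dd) < d2 \<Longrightarrow> [y, w2] \<in> P"
    using local[OF order_trans lb[OF bY]] by blast
  have "\<exists>y1\<in>Y. y1 < dd + d2"
  proof (rule ccontr)
    assume "\<not> (\<exists>y1\<in>Y. y1 < dd + d2)"
    hence "dd + d2 \<le> dd" by (intro great) (auto simp: not_less)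
    with w2(2) show False by simp
  qed
  then obtain y1 where y1: "cs < y1" "y1 \<le> b" "y1 < dd + d2" by (auto simp: Y_def)
  obtain wc where wc: "0 < wc" "\<And>y. a \<le> y \<Longrightarrow> y \<le> cs \<Longrightarrow> [y, wc] \<in> P"
    using cs(1) by (auto simp: radius_ends_def)
  have "gabs (y - dd) < d2" if "cs < y" "y \<le> y1" for y
  proof -
    have "dd \<le> y" using lb that y1(2) by (auto simp: Y_def)
    hence "dd < y + d2" using w2(2) by (metis add.commute add_strict_increasing)
    moreover have "y < dd + d2" using \<open>y \<le> y1\<close> y1(3) by (rule le_less_trans)
    ultimately show ?thesis by (simp add: gabs_diff_less_iff)
  qed
  hence "[y, min w2 wc] \<in> P" if "a \<le> y" "y \<le> y1" for y
    using glue_uniform_radius[OF down_closed_pairs[OF assms(2)] wc w2(1) w2(3)] y1(2) that by blast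
  hence "y1 \<in> radius_ends P a b"
    using \<open>a \<le> cs\<close> y1 w2(1) wc(1) by (auto simp: radius_ends_def intro!: exI[of _ "min w2 wc"])
  with y1(1) show ?thesis by blast
qed

lemma interval_uniform_radius:
  assumes "a \<le> b" and P: "P \<in> S 2" "down_closed P"
    and local: "\<And>y. a \<le> y \<Longrightarrow> y \<le> b \<Longrightarrow>
       \<exists>w>0. \<exists>d>0. \<forall>y'. a \<le> y' \<longrightarrow> y' \<le> b \<longrightarrow> gabs (y' - y) < d \<longrightarrow> [y', w] \<in> P"
  shows "\<exists>w>0. \<forall>y. a \<le> y \<longrightarrow> y \<le> b \<longrightarrow> [y, w] \<in> P"
proof -
  let ?X = "radius_ends P a b"
  have "a \<in> ?X"
  proof -
    obtain w d where "0 < w" "0 < d" "\<forall>y'. a \<le> y' \<longrightarrow> y' \<le> b \<longrightarrow> gabs (y' - a) < d \<longrightarrow> [y', w] \<in> P"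
      using local[OF order_refl \<open>a \<le> b\<close>] by blast
    thus ?thesis using \<open>a \<le> b\<close> by (auto simp: radius_ends_def gabs_def dest: order_antisym intro!: exI[of _ w])
  qed
  moreover have "\<And>x. x \<in> ?X \<Longrightarrow> x \<le> b" by (simp add: radius_ends_def)
  ultimately obtain cs where ub: "\<And>x. x \<in> ?X \<Longrightarrow> x \<le> cs"
    and least: "\<And>b. (\<And>x. x \<in> ?X \<Longrightarrow> x \<le> b) \<Longrightarrow> cs \<le> b"
    using definable_Sup[OF definable_radius_ends[OF P(1)]] by blast
  have cs: "cs \<in> ?X" using Sup_mem_radius_ends[OF P(2) local \<open>a \<in> ?X\<close> ub least] .
  have "cs = b"
  proof (rule ccontr)
    assume "cs \<noteq> b"
    with cs have "cs < b" by (auto simp: radius_ends_def)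
    with radius_ends_extend[OF P local cs] obtain y1 where "y1 \<in> ?X" "cs < y1" by blast
    with ub show False by (simp add: leD)
  qed
  with cs show ?thesis by (auto simp: radius_ends_def)
qed

end

definition box :: "nat \<Rightarrow> 'a::linorder \<Rightarrow> 'a \<Rightarrow> 'a list set" where
  "box m a b = {xs \<in> tuples m. \<forall>i<m. a \<le> xs ! i \<and> xs ! i \<le> b}"

definition local_radius :: "nat \<Rightarrow> 'a::linordered_ab_group_add list set \<Rightarrow> 'a list set \<Rightarrow> bool" where
  "local_radius m K Z \<longleftrightarrow> (\<forall>xs\<in>K. \<exists>u>0. \<exists>d>0. \<forall>xs'\<in>K. near m xs xs' d \<longrightarrow> xs' @ [u] \<in> Z)"

definition fibrewise_radius :: "nat \<Rightarrow> 'a::linordered_ab_group_add \<Rightarrow> 'a \<Rightarrow> 'a list set \<Rightarrow> 'a list set" where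
  "fibrewise_radius m a b Z = {xs @ [u] | xs u. length xs = m \<and> (\<forall>y. a \<le> y \<and> y \<le> b \<longrightarrow> xs @ [y, u] \<in> Z)}"

lemma box_snoc: "xs @ [y] \<in> box (Suc m) a b \<longleftrightarrow> xs \<in> box m a b \<and> a \<le> y \<and> y \<le> b"
  by (auto simp: box_def tuples_def nth_append less_Suc_eq all_conj_distrib)

lemma box_zero: "box 0 a b = {[]}"
  by (auto simp: box_def tuples_def)

lemma map_nth_append_prefix: "length xs = m \<Longrightarrow> map (nth (xs @ ys)) [0..<m] = xs"
  by (rule nth_equalityI) (auto simp: nth_append)

lemma mem_fibrewise_radius:
  "length xs = m \<Longrightarrow> xs @ [u] \<in> fibrewise_radius m a b Z \<longleftrightarrow> (\<forall>y. a \<le> y \<and> y \<le> b \<longrightarrow> xs @ [y, u] \<in> Z)"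
  by (auto simp: fibrewise_radius_def)

lemma down_closed_fibrewise_radius: "down_closed Z \<Longrightarrow> down_closed (fibrewise_radius m a b Z)"
  unfolding down_closed_def fibrewise_radius_def
  by clarsimp (metis append.assoc append_Cons append_Nil)

lemma fibrewise_radius_uniform:
  assumes "\<forall>xs\<in>box m a b. xs @ [u] \<in> fibrewise_radius m a b Z"
  shows "\<forall>zs\<in>box (Suc m) a b. zs @ [u] \<in> Z"
proof
  fix zs assume zs: "zs \<in> box (Suc m) a b"
  then obtain xs y where "zs = xs @ [y]" "length xs = m"
    by (auto simp: box_def tuples_def length_Suc_conv_rev)
  with zs assms show "zs @ [u] \<in> Z"
    by (auto simp: box_snoc mem_fibrewise_radius)
qed

lemma near_mono: "near m x x' d \<Longrightarrow> d \<le> d' \<Longrightarrow> near m x x' d'"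
  by (auto simp: near_def intro: less_le_trans)

lemma near_snoc:
  assumes "length xs = m" "length xs' = m"
  shows "near (Suc m) (xs @ [y]) (xs' @ [y']) d \<longleftrightarrow> near m xs xs' d \<and> gabs (y - y') < d"
  using assms by (auto simp: near_def nth_append less_Suc_eq)

definition radius_slice :: "nat \<Rightarrow> 'a::linordered_ab_group_add list \<Rightarrow> 'a list set \<Rightarrow> 'a list set \<Rightarrow> 'a list set" where
  "radius_slice m xs K Z = {[y, w] | y w. \<forall>xs'\<in>K. near m xs xs' w \<longrightarrow> xs' @ [y, w] \<in> Z}"

lemma mem_radius_slice: "[y, w] \<in> radius_slice m xs K Z \<longleftrightarrow> (\<forall>xs'\<in>K. near m xs xs' w \<longrightarrow> xs' @ [y, w] \<in> Z)"
  by (simp add: radius_slice_def)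

lemma down_closed_radius_slice: "down_closed Z \<Longrightarrow> down_closed (radius_slice m xs K Z)"
  unfolding down_closed_def
proof (intro allI impI)
  fix zs u u' assume Z: "\<forall>zs u u'. zs @ [u] \<in> Z \<longrightarrow> 0 < u' \<longrightarrow> u' \<le> u \<longrightarrow> zs @ [u'] \<in> Z"
    and "zs @ [u] \<in> radius_slice m xs K Z" "0 < u'" "u' \<le> u"
  then obtain y where y: "zs = [y]" "\<forall>xs'\<in>K. near m xs xs' u \<longrightarrow> xs' @ [y, u] \<in> Z"
    by (auto simp: radius_slice_def append_eq_Cons_conv)
  have "xs' @ [y, u'] \<in> Z" if "xs' \<in> K" "near m xs xs' u'" for xs'
    using Z y(2) that near_mono[OF that(2) \<open>u' \<le> u\<close>] \<open>0 < u'\<close> \<open>u' \<le> u\<close>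
    by (metis append.assoc append_Cons append_Nil)
  thus "zs @ [u'] \<in> radius_slice m xs K Z" using y(1) by (simp add: mem_radius_slice)
qed

context expansion
begin

lemma definable_box: "box m a b \<in> S m"
  by (rule definable_by_formula[where \<phi> = "Conjs (map (\<lambda>i. Conj (Atom (ge_const a) [i]) (Atom (le_const b) [i])) [0..<m])"])
    (auto simp: box_def tuples_def definable_rels intro!: wf_fm_Conjs)

lemma definable_fibrewise_radius:
  assumes "Z \<in> S (Suc (Suc m))"
  shows "fibrewise_radius m a b Z \<in> S (Suc m)"
proof (rule definable_by_formula[where \<phi> = "Forall (Imp (Conj (Atom (ge_const a) [Suc m]) (Atom (le_const b) [Suc m]))
      (Atom Z ([0..<m] @ [Suc m, m])))"])
  show "fibrewise_radius m a b Z = solutions (Suc m) (Forall (Imp (Conj (Atom (ge_const a) [Suc m]) (Atom (le_const b) [Suc m]))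
      (Atom Z ([0..<m] @ [Suc m, m]))))"
    by (auto simp: fibrewise_radius_def length_Suc_conv_rev map_nth_append_prefix nth_append)
qed (use assms in \<open>auto simp: definable_rels\<close>)

lemma definable_radius_slice:
  assumes "K \<in> S m" "Z \<in> S (Suc (Suc m))"
  shows "radius_slice m xs K Z \<in> S 2"
proof -
  let ?shift = "map (\<lambda>i. Suc (Suc i)) [0..<m]"
  let ?\<phi> = "Foralls m (Imp (Conj (Atom K ?shift) (Conjs (map (\<lambda>i. Atom (ball_rel (xs ! i)) [Suc (Suc i), 1]) [0..<m])))
      (Atom Z (?shift @ [0, 1])))"
  have K: "\<And>xs'. xs' \<in> K \<Longrightarrow> length xs' = m" using definable_subset[OF assms(1)] by (auto simp: tuples_def)
  have "map (nth ([y, w] @ zs)) ?shift = zs" if "length zs = m" for y w :: 'a and zs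
    using that by (intro nth_equalityI) auto
  hence "radius_slice m xs K Z = solutions 2 ?\<phi>"
    by (auto simp: radius_slice_def near_def numeral_2_eq_2 length_Suc_conv K o_def)
  moreover have "wf_fm S 2 ?\<phi>"
    using assms by (auto simp: definable_rels intro!: wf_fm_Conjs)
  ultimately show ?thesis by (rule definable_by_formula)
qed

end

context dc_expansion
begin

text \<open>Around a point \<open>xs\<close> of the smaller box, the radius \<open>w\<close> is also used as the size of the
  neighbourhood of \<open>xs\<close>; this keeps the slice binary and downward closed in \<open>w\<close>, so that
  \<open>interval_uniform_radius\<close> applies along the last coordinate.\<close>

lemma local_radius_fibrewise_radius:
  assumes "a \<le> b" and Z: "Z \<in> S (Suc (Suc m))" "down_closed Z"
    and loc: "local_radius (Suc m) (box (Suc m) a b) Z"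
  shows "local_radius m (box m a b) (fibrewise_radius m a b Z)"
  unfolding local_radius_def
proof
  fix xs assume xs: "xs \<in> box m a b"
  hence "length xs = m" by (simp add: box_def tuples_def)
  let ?P = "radius_slice m xs (box m a b) Z"
  have "\<exists>w>0. \<exists>d>0. \<forall>y'. a \<le> y' \<longrightarrow> y' \<le> b \<longrightarrow> gabs (y' - y) < d \<longrightarrow> [y', w] \<in> ?P"
    if "a \<le> y" "y \<le> b" for y
  proof -
    have "xs @ [y] \<in> box (Suc m) a b" using xs that by (simp add: box_snoc)
    then obtain u d where ud: "0 < u" "0 < d"
      "\<And>zs. zs \<in> box (Suc m) a b \<Longrightarrow> near (Suc m) (xs @ [y]) zs d \<Longrightarrow> zs @ [u] \<in> Z"
      using loc unfolding local_radius_def by blast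
    have "[y', min u d] \<in> ?P" if "a \<le> y'" "y' \<le> b" "gabs (y' - y) < d" for y'
      unfolding mem_radius_slice
    proof (intro ballI impI)
      fix xs' assume xs': "xs' \<in> box m a b" "near m xs xs' (min u d)"
      hence "length xs' = m" by (simp add: box_def tuples_def)
      moreover have "near m xs xs' d" using xs'(2) by (rule near_mono) simp
      ultimately have "near (Suc m) (xs @ [y]) (xs' @ [y']) d"
        using near_snoc[OF \<open>length xs = m\<close>] that(3) gabs_diff_commute[of y' y] by simp
      hence "(xs' @ [y']) @ [u] \<in> Z" using ud(3)[of "xs' @ [y']"] xs'(1) that(1,2) by (simp add: box_snoc)
      from down_closedD[OF Z(2) this] ud(1,2) show "xs' @ [y', min u d] \<in> Z" by simp
    qed
    thus ?thesis using ud(1,2) by (intro exI[of _ "min u d"] exI[of _ d]) auto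
  qed
  then obtain w where w: "0 < w" "\<And>y. a \<le> y \<Longrightarrow> y \<le> b \<Longrightarrow> [y, w] \<in> ?P"
    using interval_uniform_radius[OF \<open>a \<le> b\<close> definable_radius_slice[OF definable_box Z(1)]
        down_closed_radius_slice[OF Z(2)]]
    by blast
  have "xs' @ [w] \<in> fibrewise_radius m a b Z" if "xs' \<in> box m a b" "near m xs xs' w" for xs'
    using that w(2) by (auto simp: mem_fibrewise_radius box_def tuples_def mem_radius_slice)
  thus "\<exists>u>0. \<exists>d>0. \<forall>xs'\<in>box m a b. near m xs xs' d \<longrightarrow> xs' @ [u] \<in> fibrewise_radius m a b Z"
    using w(1) by blast
qed

lemma definable_box_uniform_radius:
  assumes "a \<le> b" "Z \<in> S (Suc m)" "down_closed Z" "local_radius m (box m a b) Z"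
  shows "\<exists>u>0. \<forall>xs\<in>box m a b. xs @ [u] \<in> Z"
  using assms(2-)
proof (induction m arbitrary: Z)
  case 0
  thus ?case by (auto simp: local_radius_def box_zero near_def)
next
  case (Suc m)
  have "fibrewise_radius m a b Z \<in> S (Suc m)" "down_closed (fibrewise_radius m a b Z)"
    "local_radius m (box m a b) (fibrewise_radius m a b Z)"
    using definable_fibrewise_radius down_closed_fibrewise_radius
      local_radius_fibrewise_radius[OF assms(1)] Suc.prems by simp_all
  then obtain u where "0 < u" "\<forall>xs\<in>box m a b. xs @ [u] \<in> fibrewise_radius m a b Z"
    using Suc.IH by blast
  thus ?case using fibrewise_radius_uniform by blast
qed

end

section \<open>Uniform convergence\<close>

lemma oint_radius:
  fixes c p :: "'a::linordered_ab_group_add"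
  assumes "c \<in> oint lo hi" "0 < p"
  obtains d where "0 < d" "\<And>y. gabs (c - y) < d \<Longrightarrow> y \<in> oint lo hi"
proof -
  define dl where "dl = (case lo of None \<Rightarrow> p | Some l \<Rightarrow> c - l)"
  define dh where "dh = (case hi of None \<Rightarrow> p | Some h \<Rightarrow> h - c)"
  have "0 < min dl dh" using assms by (auto simp: dl_def dh_def oint_def split: option.splits)
  moreover have "y \<in> oint lo hi" if "gabs (c - y) < min dl dh" for y
  proof -
    have "c - y < dl" "y - c < dh" using that by (auto simp: gabs_less_iff)
    thus ?thesis by (auto simp: dl_def dh_def oint_def split: option.splits)
  qed
  ultimately show ?thesis using that by blast
qed

lemma positive_below_all:
  fixes Q :: "nat \<Rightarrow> 'a::linordered_ab_group_add \<Rightarrow> bool" and p :: 'a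
  assumes "\<And>i. i < m \<Longrightarrow> \<exists>d>0. Q i d" "\<And>i d d'. Q i d \<Longrightarrow> 0 < d' \<Longrightarrow> d' \<le> d \<Longrightarrow> Q i d'"
    and "0 < p"
  shows "\<exists>d>0. \<forall>i<m. Q i d"
  using assms(1)
proof (induction m)
  case 0 thus ?case using assms(3) by blast
next
  case (Suc m)
  then obtain d1 d2 where "0 < d1" "\<forall>i<m. Q i d1" "0 < d2" "Q m d2" by (meson less_Suc_eq)
  hence "\<forall>i<Suc m. Q i (min d1 d2)" using assms(2) by (auto simp: less_Suc_eq)
  thus ?case using \<open>0 < d1\<close> \<open>0 < d2\<close> by (intro exI[of _ "min d1 d2"]) simp
qed

lemma open_in_power_near:
  fixes x :: "'a::linordered_ab_group_add list" and p :: 'a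
  assumes "open_in_power m U" "x \<in> U" "0 < p"
  obtains d where "0 < d" "\<And>y. y \<in> tuples m \<Longrightarrow> near m x y d \<Longrightarrow> y \<in> U"
proof -
  obtain lo hi where lohi: "\<forall>i<m. x ! i \<in> oint (lo i) (hi i)"
    "{y \<in> tuples m. \<forall>i<m. y ! i \<in> oint (lo i) (hi i)} \<subseteq> U"
    using assms(1,2) unfolding open_in_power_def by blast
  have "\<exists>d>0. \<forall>i<m. \<forall>y. gabs (x ! i - y) < d \<longrightarrow> y \<in> oint (lo i) (hi i)"
  proof (rule positive_below_all[OF _ _ assms(3)])
    show "\<exists>d>0. \<forall>y. gabs (x ! i - y) < d \<longrightarrow> y \<in> oint (lo i) (hi i)" if "i < m" for i
      using oint_radius[OF lohi(1)[rule_format, OF that] assms(3)] by blast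
  qed (meson less_le_trans)
  then obtain d where d: "0 < d" "\<forall>i<m. \<forall>y. gabs (x ! i - y) < d \<longrightarrow> y \<in> oint (lo i) (hi i)"
    by blast
  show ?thesis
  proof (rule that[OF d(1)])
    fix y assume "y \<in> tuples m" "near m x y d"
    thus "y \<in> U" using d(2) lohi(2) by (auto simp: near_def)
  qed
qed

lemma bounded_in_power_subset_box:
  assumes "bounded_in_power m C" "C \<subseteq> tuples m"
  obtains B where "- B \<le> B" "C \<subseteq> box m (- B) B"
proof -
  obtain B where B: "\<forall>x\<in>C. \<forall>i<m. gabs (x ! i) \<le> B" using assms(1) by (auto simp: bounded_in_power_def)
  have "- max B 0 \<le> max B 0" by (simp add: le_max_iff_disj)
  moreover have "C \<subseteq> box m (- max B 0) (max B 0)"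
    using assms(2) B by (fastforce simp: box_def gabs_le_iff minus_le_iff le_max_iff_disj)
  ultimately show ?thesis by (rule that)
qed

definition cauchy_radius ::
  "nat \<Rightarrow> 'a::linordered_ab_group_add list set \<Rightarrow> 'a \<Rightarrow> ('a list \<Rightarrow> 'a \<Rightarrow> 'a) \<Rightarrow> 'a \<Rightarrow> 'a list set" where
  "cauchy_radius m C s F e = {x @ [u] | x u. length x = m \<and> (x \<in> C \<longrightarrow>
     (\<forall>t t'. 0 < t \<longrightarrow> t < u \<longrightarrow> t < s \<longrightarrow> 0 < t' \<longrightarrow> t' < u \<longrightarrow> t' < s \<longrightarrow> gabs (F x t - F x t') < e))}"

lemma mem_cauchy_radius:
  "length x = m \<Longrightarrow> x @ [u] \<in> cauchy_radius m C s F e \<longleftrightarrow> (x \<in> C \<longrightarrow>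
     (\<forall>t t'. 0 < t \<longrightarrow> t < u \<longrightarrow> t < s \<longrightarrow> 0 < t' \<longrightarrow> t' < u \<longrightarrow> t' < s \<longrightarrow> gabs (F x t - F x t') < e))"
  by (auto simp: cauchy_radius_def)

lemma down_closed_cauchy_radius: "down_closed (cauchy_radius m C s F e)"
  unfolding down_closed_def cauchy_radius_def by (auto dest: less_le_trans)

context expansion
begin

lemma definable_cauchy_radius:
  assumes "C \<in> S m" "definable_family S m C s F"
  shows "cauchy_radius m C s F e \<in> S (Suc m)"
proof -
  define G where "G = {x @ [t, F x t] | x t. x \<in> C \<and> 0 < t \<and> t < s}"
  have G: "G \<in> S (Suc (Suc m))" using assms(2) by (simp add: definable_family_def G_def)
  have C: "\<And>x. x \<in> C \<Longrightarrow> length x = m" using definable_subset[OF assms(1)] by (auto simp: tuples_def)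
  have mem_G: "x @ [t, v] \<in> G \<longleftrightarrow> x \<in> C \<and> 0 < t \<and> t < s \<and> v = F x t" if "length x = m" for x t v
    using that C by (auto simp: G_def)
  let ?x = "[0..<m]" and ?u = m and ?t = "Suc m" and ?t' = "Suc (Suc m)"
  let ?\<phi> = "Disj (Neg (Atom C ?x)) (Forall (Forall (Imp
      (Conj (Atom (gt_const 0) [?t]) (Conj (Atom lt_rel [?t, ?u]) (Conj (Atom (lt_const s) [?t])
        (Conj (Atom (gt_const 0) [?t']) (Conj (Atom lt_rel [?t', ?u]) (Atom (lt_const s) [?t']))))))
      (Exists (Exists (Conj (Atom G (?x @ [?t, Suc ?t'])) (Conj (Atom G (?x @ [?t', Suc (Suc ?t')]))
        (Atom (dist_less e) [Suc ?t', Suc (Suc ?t')]))))))))"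
  have "cauchy_radius m C s F e = solutions (Suc m) ?\<phi>"
    by (auto simp: cauchy_radius_def length_Suc_conv_rev map_nth_append_prefix nth_append mem_G)
  moreover have "wf_fm S (Suc m) ?\<phi>" using assms(1) G by (simp add: definable_rels)
  ultimately show ?thesis by (rule definable_by_formula)
qed

end

lemma cauchy_radius_near_mem:
  assumes "x \<in> C" "0 < e" "pointwise_convergent_family C s F" "equi_continuous_family m C s F"
  obtains u d where "0 < u" "0 < d"
    "\<And>x'. length x' = m \<Longrightarrow> near m x x' d \<Longrightarrow> x' @ [u] \<in> cauchy_radius m C s F e"
proof -
  obtain e' where e': "0 < e'"
    "\<And>a b c. gabs a < e' \<Longrightarrow> gabs b < e' \<Longrightarrow> gabs c < e' \<Longrightarrow> gabs (a + b + c) < e"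
    using gabs_add3_small[OF assms(2)] by blast
  obtain d where d: "0 < d"
    "\<forall>t. 0 < t \<and> t < s \<longrightarrow> (\<forall>x'\<in>C. near m x x' d \<longrightarrow> gabs (F x t - F x' t) < e')"
    using assms(1,4) e'(1) unfolding equi_continuous_family_def by blast
  obtain u where u: "0 < u" "\<forall>t t'. 0 < t \<and> t < u \<and> t < s \<and> 0 < t' \<and> t' < u \<and> t' < s \<longrightarrow>
      gabs (F x t - F x t') < e'"
    using assms(1,3) e'(1) unfolding pointwise_convergent_family_def by blast
  have "x' @ [u] \<in> cauchy_radius m C s F e" if x': "length x' = m" "near m x x' d" for x'
    unfolding mem_cauchy_radius[OF x'(1)]
  proof (intro impI allI)
    fix t t' assume "x' \<in> C" "0 < t" "t < u" "t < s" "0 < t'" "t' < u" "t' < s"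
    hence "gabs (F x' t - F x t) < e'" "gabs (F x t - F x t') < e'" "gabs (F x t' - F x' t') < e'"
      using d(2) u(2) x'(2) gabs_diff_commute by metis+
    hence "gabs ((F x' t - F x t) + (F x t - F x t') + (F x t' - F x' t')) < e" by (rule e'(2))
    thus "gabs (F x' t - F x' t') < e" by (simp add: algebra_simps)
  qed
  with u(1) d(1) show ?thesis by (rule that)
qed

lemma local_radius_cauchy_radius:
  assumes "closed_in_power m C" "0 < s" "0 < e" "K \<subseteq> tuples m"
    and "pointwise_convergent_family C s F" "equi_continuous_family m C s F"
  shows "local_radius m K (cauchy_radius m C s F e)"
  unfolding local_radius_def
proof
  fix x assume "x \<in> K"
  with assms(4) have x: "x \<in> tuples m" by blast
  show "\<exists>u>0. \<exists>d>0. \<forall>x'\<in>K. near m x x' d \<longrightarrow> x' @ [u] \<in> cauchy_radius m C s F e"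
  proof (cases "x \<in> C")
    case True
    obtain u d where "0 < u" "0 < d"
      "\<And>x'. length x' = m \<Longrightarrow> near m x x' d \<Longrightarrow> x' @ [u] \<in> cauchy_radius m C s F e"
      using cauchy_radius_near_mem[OF True assms(3,5,6)] by metis
    moreover have "\<And>x'. x' \<in> K \<Longrightarrow> length x' = m" using assms(4) by (auto simp: tuples_def)
    ultimately show ?thesis by blast
  next
    case False
    have "open_in_power m (tuples m - C)" using assms(1) by (simp add: closed_in_power_def)
    moreover have "x \<in> tuples m - C" using x False by blast
    ultimately obtain d where "0 < d" "\<And>y. y \<in> tuples m \<Longrightarrow> near m x y d \<Longrightarrow> y \<in> tuples m - C"
      using open_in_power_near[OF _ _ assms(2)] by metis
    hence "\<forall>x'\<in>K. near m x x' d \<longrightarrow> x' @ [s] \<in> cauchy_radius m C s F e"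
      using assms(4) by (auto simp: mem_cauchy_radius tuples_def)
    with \<open>0 < d\<close> assms(2) show ?thesis by blast
  qed
qed

lemma uniformly_convergent_if_cauchy_radius:
  assumes "C \<subseteq> tuples m" "\<And>e. 0 < e \<Longrightarrow> \<exists>u>0. \<forall>x\<in>C. x @ [u] \<in> cauchy_radius m C s F e"
  shows "uniformly_convergent_family C s F"
  unfolding uniformly_convergent_family_def
proof (intro allI impI)
  fix e :: 'a assume "0 < e"
  then obtain u where u: "0 < u" "\<forall>x\<in>C. x @ [u] \<in> cauchy_radius m C s F e" using assms(2) by blast
  have "gabs (F x t - F x t') < e"
    if "x \<in> C" "0 < t \<and> t < u \<and> t < s \<and> 0 < t' \<and> t' < u \<and> t' < s" for x t t'
  proof -
    have "length x = m" using assms(1) \<open>x \<in> C\<close> by (auto simp: tuples_def)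
    thus ?thesis using u(2) that by (auto simp: mem_cauchy_radius)
  qed
  with u(1) show "\<exists>s'>0. \<forall>x\<in>C. \<forall>t t'. 0 < t \<and> t < s' \<and> t < s \<and> 0 < t' \<and> t' < s' \<and> t' < s \<longrightarrow>
      gabs (F x t - F x t') < e"
    by blast
qed

theorem mainTheorem1:
  fixes S :: "nat \<Rightarrow> ('a::linordered_ab_group_add) list set set"
    and m :: nat and C :: "'a list set" and s :: 'a and F :: "'a list \<Rightarrow> 'a \<Rightarrow> 'a"
  assumes "expansion_structure S"
    and "definably_complete S"
    and "locally_o_minimal S"
    and "C \<in> S m"
    and "closed_in_power m C"
    and "bounded_in_power m C"
    and "0 < s"
    and "definable_family S m C s F"
    and "pointwise_convergent_family C s F"
    and "equi_continuous_family m C s F"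
  shows "uniformly_convergent_family C s F"
proof (rule uniformly_convergent_if_cauchy_radius)
  interpret dc_expansion S by unfold_locales (fact assms(1), fact assms(2))
  show "C \<subseteq> tuples m" using assms(5) by (simp add: closed_in_power_def)
  then obtain B where "- B \<le> B" and C_box: "C \<subseteq> box m (- B) B"
    using bounded_in_power_subset_box assms(6) by blast
  fix e :: 'a assume "0 < e"
  have "local_radius m (box m (- B) B) (cauchy_radius m C s F e)"
    using local_radius_cauchy_radius[OF assms(5,7) \<open>0 < e\<close> _ assms(9,10)] by (auto simp: box_def)
  then obtain u where "0 < u" "\<forall>x\<in>box m (- B) B. x @ [u] \<in> cauchy_radius m C s F e"
    using definable_box_uniform_radius[OF \<open>- B \<le> B\<close> definable_cauchy_radius[OF assms(4,8)]]
      down_closed_cauchy_radius by blast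
  with C_box show "\<exists>u>0. \<forall>x\<in>C. x @ [u] \<in> cauchy_radius m C s F e" by blast
qed

end
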